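(* Let $l^\top\ge 1$ be an integer, $\varepsilon>0$, $\theta\in\mathbb{R}$, and $\beta=|\mathcal{I}|+1$. Consider datasets in which every sequence has length at most $l^\top$. Then the modified PrivTree for PSTs (described below) with $\lambda\ge\frac{2\beta-1}{\beta-1}\cdot\frac{l^\top}{\varepsilon}$ and $\delta=\lambda\ln\beta$ satisfies $\varepsilon$-differential privacy, where two datasets are neighboring if one is obtained from the other by inserting a single sequence of length at most $l^\top$.
   Context: $\mathrm{Lap}(\lambda)$ is the Laplace distribution with density $\frac{1}{2\lambda}e^{-|y|/\lambda}$. $\mathcal{I}$ is a finite alphabet and $\$,\&$ are special symbols not in $\mathcal{I}$. A sequence is a string $s=\$x_1\cdots x_l$ with each $x_i\in\mathcal{I}\cup\{\&\}$, where $\&$ may occur only as the last symbol; its length is $l$. A dataset is a finite multiset of sequences. A PST node is a string $w$ over $\mathcal{I}\cup\{\$\}$ in which $\$$ can occur only as the first symbol; the root is the empty string; if $w$ does not start with $\$$ its children are $yw$ for $y\in\mathcal{I}\cup\{\$\}$; $\mathrm{depth}(w)$ is the length of $w$. For $x\in\mathcal{I}\cup\{\&\}$, $\mathrm{hist}(w)[x]$ is the total over sequences $\$x_1\cdots x_l$ in $D$ of the number of positions $i\in[1,l]$ with $x_i=x$ such that $w$ is a suffix of $\$x_1\cdots x_{i-1}$. The score is $c(w)=\sum_{x}\mathrm{hist}(w)[x]-\max_{x}\mathrm{hist}(w)[x]$ (over $x\in\mathcal{I}\cup\{\&\}$). Modified PrivTree$(D,\lambda,\theta,\delta)$: start with the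 tree containing only the root, unvisited. While some node $w$ is unvisited: mark it visited; if $w$ starts with $\$$, it is not split; otherwise set $b(w)=\max\{\theta-\delta,\ c(w)-\mathrm{depth}(w)\delta\}$, $\hat b(w)=b(w)+\eta_w$ with $\eta_w\sim\mathrm{Lap}(\lambda)$ fresh and independent, and if $\hat b(w)>\theta$ add all $|\mathcal{I}|+1$ children of $w$ as unvisited nodes. Output: the tree of nodes (strings) only, with all scores and histograms removed. An algorithm $\mathcal{A}$ is $\varepsilon$-differentially private if for all neighboring $D,D'$ and all outputs $O$, $\ln\big(\Pr[\mathcal{A}(D)=O]/\Pr[\mathcal{A}(D')=O]\big)\le\varepsilon$. *)

theory Defs
  imports "HOL-Probability.Probability" "HOL-Library.Sublist"
begin

(* Alphabet I = the finite type 'a.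
   A sequence $x_1...x_l is encoded as the list [x_1,...,x_l] :: 'a option list,
   where Some a encodes the item a \<in> I and None encodes the end symbol &.
   The leading $ is implicit. *)
type_synonym 'a sequence = "'a option list"

definition valid_seq :: "'a sequence \<Rightarrow> bool" where
  "valid_seq s \<longleftrightarrow> None \<notin> set (butlast s)"

definition seq_len :: "'a sequence \<Rightarrow> nat" where
  "seq_len s = length s"

type_synonym 'a dataset = "'a sequence multiset"

(* PST nodes: strings over I \<union> {$}, encoded as 'a option list where None encodes $
   and Some a encodes a \<in> I.  The root is []. Children of w are y # w. *)
type_synonym 'a node = "'a option list"

definition starts_dollar :: "'a node \<Rightarrow> bool" where
  "starts_dollar w \<longleftrightarrow> w \<noteq> [] \<and> hd w = None"

definition depth :: "'a node \<Rightarrow> nat" where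
  "depth w = length w"

(* The string $x_1...x_{i-1} as a node-string: None # take (i-1) s
   (for valid s the x_j, j < l, all lie in I, i.e. are of the form Some a).
   hist(w)[x] for x \<in> I \<union> {&} (x :: 'a option, None = &), with 0-based position i. *)
definition hist :: "'a dataset \<Rightarrow> 'a node \<Rightarrow> 'a option \<Rightarrow> nat" where
  "hist D w x = (\<Sum>s\<in>#D. card {i. i < length s \<and> s ! i = x \<and> suffix w (None # take i s)})"

definition score :: "'a::finite dataset \<Rightarrow> 'a node \<Rightarrow> real" where
  "score D w = real (\<Sum>x\<in>UNIV. hist D w x) - real (Max (range (hist D w)))"

definition bias :: "'a::finite dataset \<Rightarrow> real \<Rightarrow> real \<Rightarrow> 'a node \<Rightarrow> real" where
  "bias D \<theta> \<delta> w = max (\<theta> - \<delta>) (score D w - real (depth w) * \<delta>)"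

definition laplace :: "real \<Rightarrow> real measure" where
  "laplace lam = density lborel (\<lambda>y. ennreal (exp (- \<bar>y\<bar> / lam) / (2 * lam)))"

(* Fresh independent noise for every node: one i.i.d. Laplace variable per possible node.
   (Each node is visited at most once, so pre-sampling is equivalent.) *)
definition noise :: "real \<Rightarrow> ('a node \<Rightarrow> real) measure" where
  "noise lam = PiM UNIV (\<lambda>_. laplace lam)"

inductive_set privtree_tree :: "'a::finite dataset \<Rightarrow> real \<Rightarrow> real \<Rightarrow> ('a node \<Rightarrow> real) \<Rightarrow> 'a node set"
  for D \<theta> \<delta> \<eta> where
  root: "[] \<in> privtree_tree D \<theta> \<delta> \<eta>"
| child: "w \<in> privtree_tree D \<theta> \<delta> \<eta> \<Longrightarrow> \<not> starts_dollar w \<Longrightarrow>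
           bias D \<theta> \<delta> w + \<eta> w > \<theta> \<Longrightarrow> y # w \<in> privtree_tree D \<theta> \<delta> \<eta>"

definition privtree_prob :: "'a::finite dataset \<Rightarrow> real \<Rightarrow> real \<Rightarrow> real \<Rightarrow> 'a node set \<Rightarrow> real" where
  "privtree_prob D lam \<theta> \<delta> Out =
     measure (noise lam) {\<eta> \<in> space (noise lam). privtree_tree D \<theta> \<delta> \<eta> = Out}"

definition bounded_dataset :: "nat \<Rightarrow> 'a dataset \<Rightarrow> bool" where
  "bounded_dataset L D \<longleftrightarrow> (\<forall>s\<in>#D. valid_seq s \<and> seq_len s \<le> L)"

definition neighboring :: "nat \<Rightarrow> 'a dataset \<Rightarrow> 'a dataset \<Rightarrow> bool" where
  "neighboring L D D' \<longleftrightarrow>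
     (\<exists>s. valid_seq s \<and> seq_len s \<le> L \<and> (D' = D + {#s#} \<or> D = D' + {#s#}))"

(* epsilon-DP of a randomized algorithm given by its output probabilities P D O,
   over datasets with sequence lengths bounded by L.
   ln(P D O / P D' O) \<le> eps is rendered multiplicatively. *)
definition differentially_private :: "nat \<Rightarrow> real \<Rightarrow> ('a dataset \<Rightarrow> 'o \<Rightarrow> real) \<Rightarrow> bool" where
  "differentially_private L \<epsilon> P \<longleftrightarrow>
     (\<forall>D D' Out. bounded_dataset L D \<longrightarrow> bounded_dataset L D' \<longrightarrow> neighboring L D D' \<longrightarrow>
        P D Out \<le> exp \<epsilon> * P D' Out)"

end

theory Submission
  imports Defs "HOL-Real_Asymp.Real_Asymp"
begin

text \<open>
  It suffices to compare \<open>D\<close> with \<open>D + {#s#}\<close>, and we pass from one to the other by appending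
  the symbols of \<open>s\<close> one at a time to an initially empty sequence, which is invisible to PrivTree.
  For a fixed output tree \<open>T\<close> the probability of \<open>T\<close> is a product over the decision nodes of
  Laplace probabilities \<open>F (\<plusminus>(b(v) - \<theta>) / \<lambda>)\<close>, \<open>F\<close> the cdf of \<open>Lap(1)\<close>. Appending a symbol
  raises by at most one the scores on a single root-to-leaf path and leaves all others unchanged.
  Towards the larger dataset only the leaf on that path can lose, by the factor \<open>e\<^bsup>1/\<lambda>\<^esup>\<close>.
  Backwards, the internal nodes of the path lose, but the depth penalty \<open>\<delta> = \<lambda> ln \<beta>\<close> makes their
  normalised biases drop by \<open>ln \<beta>\<close> per level, so the losses are increments of the potential
  \<open>-ln F\<close> at points spaced \<open>ln \<beta>\<close> apart. Integrating its derivative, whose size decays like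
  \<open>e\<^sup>-\<^sup>t\<close>, bounds their sum by \<open>(1 + \<beta> / (\<beta> - 1)) / \<lambda> = (2\<beta> - 1) / ((\<beta> - 1) \<lambda>)\<close>. With at most
  \<open>l\<^sup>\<top>\<close> symbols this is at most \<open>\<epsilon>\<close>.
\<close>

section \<open>The Laplace distribution\<close>

definition laplace_density :: "real \<Rightarrow> real \<Rightarrow> real" where
  "laplace_density lam y = exp (- \<bar>y\<bar> / lam) / (2 * lam)"

definition laplace_cdf :: "real \<Rightarrow> real" where
  "laplace_cdf y = (if y \<le> 0 then exp y / 2 else 1 - exp (- y) / 2)"

lemma laplace_density_borel [measurable]: "laplace_density lam \<in> borel_measurable borel"
  unfolding laplace_density_def by measurable

lemma laplace_density_even: "laplace_density lam (- x) = laplace_density lam x"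
  by (simp add: laplace_density_def)

lemma nn_integral_laplace_density_atLeast:
  assumes lam: "lam > 0" and a: "a \<ge> 0"
  shows "(\<integral>\<^sup>+x. ennreal (laplace_density lam x) * indicator {a..} x \<partial>lborel) = ennreal (exp (- a / lam) / 2)"
proof -
  have "(\<integral>\<^sup>+x. ennreal (laplace_density lam x) * indicator {a..} x \<partial>lborel) = 0 - (- exp (- a / lam) / 2)"
  proof (rule nn_integral_FTC_atLeast)
    fix x assume x: "a \<le> x"
    have "((\<lambda>x. - exp (- x / lam) / 2) has_real_derivative (exp (- x / lam) * (1 / lam) / 2)) (at x)"
      using lam by (auto intro!: derivative_eq_intros)
    moreover have "laplace_density lam x = exp (- x / lam) * (1 / lam) / 2"
      using x a lam by (simp add: laplace_density_def)
    ultimately show "((\<lambda>x. - exp (- x / lam) / 2) has_real_derivative laplace_density lam x) (at x)"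
      by simp
    show "0 \<le> laplace_density lam x" using lam by (simp add: laplace_density_def)
  next
    show "((\<lambda>x. - exp (- x / lam) / 2) \<longlongrightarrow> 0) at_top" using lam by real_asymp
  qed simp
  then show ?thesis by simp
qed

lemma nn_integral_laplace_density_greaterThan:
  "(\<integral>\<^sup>+x. ennreal (laplace_density lam x) * indicator {a<..} x \<partial>lborel) =
   (\<integral>\<^sup>+x. ennreal (laplace_density lam x) * indicator {a..} x \<partial>lborel)"
  by (rule nn_integral_cong_AE) (use AE_lborel_singleton[of a] in \<open>auto split: split_indicator\<close>)

lemma nn_integral_laplace_density_lessThan:
  assumes lam: "lam > 0" and a: "a \<le> 0"
  shows "(\<integral>\<^sup>+x. ennreal (laplace_density lam x) * indicator {..<a} x \<partial>lborel) = ennreal (exp (a / lam) / 2)"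
proof -
  have "(\<integral>\<^sup>+x. ennreal (laplace_density lam x) * indicator {..<a} x \<partial>lborel) =
        ennreal \<bar>-1\<bar> * (\<integral>\<^sup>+x. ennreal (laplace_density lam (0 + -1 * x)) * indicator {..<a} (0 + -1 * x) \<partial>lborel)"
    by (rule nn_integral_real_affine[where c="-1"]) auto
  also have "\<dots> = (\<integral>\<^sup>+x. ennreal (laplace_density lam x) * indicator {-a<..} x \<partial>lborel)"
    by (simp add: laplace_density_even, intro nn_integral_cong) (auto split: split_indicator)
  also have "\<dots> = ennreal (exp (a / lam) / 2)"
    using nn_integral_laplace_density_atLeast[OF lam, of "-a"] a
    by (simp add: nn_integral_laplace_density_greaterThan)
  finally show ?thesis .
qed

lemma space_laplace [simp]: "space (laplace lam) = UNIV"
  by (simp add: laplace_def)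

lemma sets_laplace [simp]: "sets (laplace lam) = sets borel"
  by (simp add: laplace_def)

lemma emeasure_laplace:
  assumes "A \<in> sets borel"
  shows "emeasure (laplace lam) A = (\<integral>\<^sup>+x. ennreal (laplace_density lam x) * indicator A x \<partial>lborel)"
  unfolding laplace_def laplace_density_def[symmetric]
  by (rule emeasure_density) (use assms in auto)

lemma prob_space_laplace:
  assumes lam: "lam > 0"
  shows "prob_space (laplace lam)"
proof
  have "emeasure (laplace lam) (space (laplace lam)) =
     (\<integral>\<^sup>+x. ennreal (laplace_density lam x) * indicator {0..} x +
            ennreal (laplace_density lam x) * indicator {..<0} x \<partial>lborel)"
    by (simp add: emeasure_laplace, intro nn_integral_cong) (auto split: split_indicator)
  also have "\<dots> = ennreal (1/2) + ennreal (1/2)"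
    using nn_integral_laplace_density_atLeast[OF lam, of 0]
      nn_integral_laplace_density_lessThan[OF lam, of 0]
    by (subst nn_integral_add) auto
  also have "\<dots> = 1"
    by (subst ennreal_plus[symmetric]) auto
  finally show "emeasure (laplace lam) (space (laplace lam)) = 1" .
qed

lemma measure_laplace_greaterThan:
  assumes lam: "lam > 0"
  shows "measure (laplace lam) {c<..} = laplace_cdf (- c / lam)"
proof (cases "c \<ge> 0")
  case True
  have "emeasure (laplace lam) {c<..} = ennreal (exp (- c / lam) / 2)"
    using nn_integral_laplace_density_atLeast[OF lam True]
    by (simp add: emeasure_laplace nn_integral_laplace_density_greaterThan)
  then show ?thesis using True lam by (simp add: measure_def laplace_cdf_def)
next
  case False
  interpret prob_space "laplace lam" by (rule prob_space_laplace[OF lam])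
  have "emeasure (laplace lam) {..c} = (\<integral>\<^sup>+x. ennreal (laplace_density lam x) * indicator {..<c} x \<partial>lborel)"
    by (simp add: emeasure_laplace)
      (rule nn_integral_cong_AE, use AE_lborel_singleton[of c] in \<open>auto split: split_indicator\<close>)
  also have "\<dots> = ennreal (exp (c / lam) / 2)"
    using nn_integral_laplace_density_lessThan[OF lam] False by simp
  finally have "measure (laplace lam) {..c} = exp (c / lam) / 2" by (simp add: measure_def)
  moreover have "{c<..} = space (laplace lam) - {..c}" by auto
  ultimately have "measure (laplace lam) {c<..} = 1 - exp (c / lam) / 2"
    using prob_compl[of "{..c}"] by simp
  moreover have "c / lam < 0" using False lam by (simp add: divide_neg_pos)
  ultimately show ?thesis by (simp add: laplace_cdf_def)
qed

lemma measure_laplace_atMost: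
  assumes lam: "lam > 0"
  shows "measure (laplace lam) {..c} = 1 - laplace_cdf (- c / lam)"
proof -
  interpret prob_space "laplace lam" by (rule prob_space_laplace[OF lam])
  have "{..c} = space (laplace lam) - {c<..}" by auto
  then show ?thesis using measure_laplace_greaterThan[OF lam, of c] prob_compl[of "{c<..}"] by simp
qed

lemma one_minus_half_exp_neg_le: "1 - exp (- y) / 2 \<le> exp y / 2" for y :: real
proof -
  define u where "u = exp y"
  have u: "u > 0" by (simp add: u_def)
  have "2 * u - 1 \<le> u * u"
    using zero_le_square[of "u - 1"] by (simp add: algebra_simps)
  then have "(2 * u - 1) / u \<le> u" using u by (simp add: divide_le_eq)
  then have "2 - 1 / u \<le> u" using u by (simp add: diff_divide_distrib)
  moreover have "exp (- y) = 1 / u" by (simp add: u_def exp_minus divide_inverse)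
  ultimately show ?thesis by (simp add: u_def)
qed

lemma laplace_cdf_pos: "0 < laplace_cdf y"
proof (cases "y \<le> 0")
  case False
  then have "exp (- y) < 1" by simp
  then have "0 < 1 - exp (- y) / 2" by linarith
  then show ?thesis using False by (simp add: laplace_cdf_def)
qed (simp add: laplace_cdf_def)

lemma laplace_cdf_uminus: "laplace_cdf (- y) = 1 - laplace_cdf y"
  by (auto simp: laplace_cdf_def)

lemma laplace_cdf_mono:
  assumes yz: "y \<le> z"
  shows "laplace_cdf y \<le> laplace_cdf z"
proof -
  consider "z \<le> 0" | "y \<le> 0" "0 < z" | "0 < y" using yz by linarith
  then show ?thesis
  proof cases
    case 2
    have "exp y \<le> 1" "exp (- z) \<le> 1" using 2 by auto
    then have "exp y / 2 \<le> 1 - exp (- z) / 2" by linarith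
    then show ?thesis using 2 by (simp add: laplace_cdf_def)
  qed (use yz in \<open>simp_all add: laplace_cdf_def\<close>)
qed

lemma laplace_cdf_min_max: "laplace_cdf y = min (exp y / 2) (max (1/2) (1 - exp (- y) / 2))"
proof (cases "y \<le> 0")
  case True
  then have "exp (- y) \<ge> 1" "exp y \<le> 1" by simp_all
  then show ?thesis using True by (auto simp: laplace_cdf_def min_def max_def)
next
  case False
  then have "exp (- y) \<le> 1" by simp
  then show ?thesis
    using False one_minus_half_exp_neg_le[of y] by (auto simp: laplace_cdf_def min_def max_def)
qed

lemma continuous_on_laplace_cdf: "continuous_on A laplace_cdf"
  unfolding laplace_cdf_min_max[abs_def] by (intro continuous_intros) auto

lemma laplace_cdf_le_exp_mult_shift:
  assumes d: "d \<ge> 0"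
  shows "laplace_cdf z \<le> exp d * laplace_cdf (z - d)"
proof (cases "z \<le> 0")
  case True
  then show ?thesis using d by (simp add: laplace_cdf_def exp_diff)
next
  case z: False
  show ?thesis
  proof (cases "z - d \<le> 0")
    case True
    then have "exp d * laplace_cdf (z - d) = exp z / 2" by (simp add: laplace_cdf_def exp_diff)
    then show ?thesis using z one_minus_half_exp_neg_le[of z] by (simp add: laplace_cdf_def)
  next
    case False
    define v where "v = exp d"
    define w where "w = exp (- z)"
    have v1: "v \<ge> 1" using d by (simp add: v_def)
    have wv: "w * v \<le> 1" using False by (simp add: v_def w_def flip: exp_add)
    have "w * 1 \<le> w * v" using v1 by (intro mult_left_mono) (simp_all add: w_def)
    then have "0 \<le> (v - 1) * (1 - w * (v + 1) / 2)"
      using v1 wv by (intro mult_nonneg_nonneg) (simp_all add: algebra_simps)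
    then have "1 - w / 2 \<le> v * (1 - w * v / 2)" by (auto simp: algebra_simps diff_divide_distrib)
    moreover have "exp (d - z) = exp (- z) * exp d" by (simp flip: exp_add)
    ultimately show ?thesis using z False by (simp add: laplace_cdf_def v_def w_def)
  qed
qed

section \<open>Outputs as events on the noise\<close>

definition privtree_shape :: "'a node set \<Rightarrow> bool" where
  "privtree_shape T \<longleftrightarrow> [] \<in> T \<and> (\<forall>y v. y # v \<in> T \<longrightarrow> v \<in> T \<and> \<not> starts_dollar v) \<and>
     (\<forall>v\<in>T. (\<exists>y. y # v \<in> T) \<longrightarrow> (\<forall>y. y # v \<in> T))"

definition internal_node :: "'a node set \<Rightarrow> 'a node \<Rightarrow> bool" where
  "internal_node T v \<longleftrightarrow> (\<forall>y. y # v \<in> T)"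

text \<open>Truncating at depth \<open>k\<close> gives finite-dimensional events on the noise; the event that the
  output is \<open>T\<close> is their decreasing intersection.\<close>

definition tested_nodes :: "'a node set \<Rightarrow> nat \<Rightarrow> 'a node set" where
  "tested_nodes T k = {v \<in> T. \<not> starts_dollar v \<and> length v < k}"

definition decision_set :: "'a::finite dataset \<Rightarrow> real \<Rightarrow> real \<Rightarrow> 'a node set \<Rightarrow> 'a node \<Rightarrow> real set" where
  "decision_set D \<theta> \<delta> T v =
     (if internal_node T v then {\<theta> - bias D \<theta> \<delta> v<..} else {..\<theta> - bias D \<theta> \<delta> v})"

definition consistent_noise ::
    "'a::finite dataset \<Rightarrow> real \<Rightarrow> real \<Rightarrow> 'a node set \<Rightarrow> nat \<Rightarrow> ('a node \<Rightarrow> real) set" where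
  "consistent_noise D \<theta> \<delta> T k = {\<eta>. \<forall>v\<in>tested_nodes T k. \<eta> v \<in> decision_set D \<theta> \<delta> T v}"

lemma privtree_tree_parent:
  assumes "y # v \<in> privtree_tree D \<theta> \<delta> \<eta>"
  shows "v \<in> privtree_tree D \<theta> \<delta> \<eta> \<and> \<not> starts_dollar v \<and> \<theta> < bias D \<theta> \<delta> v + \<eta> v"
  using assms by (cases rule: privtree_tree.cases) auto

lemma privtree_shape_privtree_tree: "privtree_shape (privtree_tree D \<theta> \<delta> \<eta>)"
  unfolding privtree_shape_def
  using privtree_tree_parent by (blast intro: privtree_tree.root privtree_tree.child)

lemma privtree_tree_internal_iff:
  assumes "v \<in> privtree_tree D \<theta> \<delta> \<eta>" "\<not> starts_dollar v"
  shows "\<theta> < bias D \<theta> \<delta> v + \<eta> v \<longleftrightarrow> internal_node (privtree_tree D \<theta> \<delta> \<eta>) v"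
  using assms privtree_tree_parent[of None v] unfolding internal_node_def
  by (blast intro: privtree_tree.child)

lemma privtree_tree_eqI:
  assumes shape: "privtree_shape T"
    and decisions: "\<And>v. v \<in> T \<Longrightarrow> \<not> starts_dollar v \<Longrightarrow> \<theta> < bias D \<theta> \<delta> v + \<eta> v \<longleftrightarrow> internal_node T v"
  shows "privtree_tree D \<theta> \<delta> \<eta> = T"
proof
  show "privtree_tree D \<theta> \<delta> \<eta> \<subseteq> T"
  proof
    fix w assume "w \<in> privtree_tree D \<theta> \<delta> \<eta>"
    then show "w \<in> T"
    proof (induction rule: privtree_tree.induct)
      case root then show ?case using shape by (simp add: privtree_shape_def)
    next
      case (child w y)
      then show ?case using decisions[of w] by (simp add: internal_node_def)
    qed
  qed
next
  show "T \<subseteq> privtree_tree D \<theta> \<delta> \<eta>"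
  proof
    fix w assume "w \<in> T"
    then show "w \<in> privtree_tree D \<theta> \<delta> \<eta>"
    proof (induction w)
      case Nil show ?case by (rule privtree_tree.root)
    next
      case (Cons y v)
      have v: "v \<in> T" "\<not> starts_dollar v" and "internal_node T v"
        using shape Cons.prems unfolding privtree_shape_def internal_node_def by blast+
      with decisions[OF v] have "\<theta> < bias D \<theta> \<delta> v + \<eta> v" by simp
      with Cons.IH[OF v(1)] v(2) show ?case by (rule privtree_tree.child)
    qed
  qed
qed

lemma space_noise [simp]: "space (noise lam) = UNIV"
  by (simp add: noise_def space_PiM)

lemma privtree_event_eq_Inter:
  assumes "privtree_shape T"
  shows "{\<eta> \<in> space (noise lam). privtree_tree D \<theta> \<delta> \<eta> = T} = (\<Inter>k. consistent_noise D \<theta> \<delta> T k)"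
proof (intro set_eqI iffI)
  fix \<eta> assume "\<eta> \<in> {\<eta> \<in> space (noise lam). privtree_tree D \<theta> \<delta> \<eta> = T}"
  then have T: "privtree_tree D \<theta> \<delta> \<eta> = T" by simp
  have "\<eta> v \<in> decision_set D \<theta> \<delta> T v" if "v \<in> T" "\<not> starts_dollar v" for v
    using privtree_tree_internal_iff[of v D \<theta> \<delta> \<eta>] that T by (auto simp: decision_set_def)
  then show "\<eta> \<in> (\<Inter>k. consistent_noise D \<theta> \<delta> T k)"
    by (auto simp: consistent_noise_def tested_nodes_def)
next
  fix \<eta> assume "\<eta> \<in> (\<Inter>k. consistent_noise D \<theta> \<delta> T k)"
  then have consistent: "\<eta> v \<in> decision_set D \<theta> \<delta> T v" if "v \<in> T" "\<not> starts_dollar v" for v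
    using that by (auto simp: consistent_noise_def tested_nodes_def)
  have "privtree_tree D \<theta> \<delta> \<eta> = T"
  proof (rule privtree_tree_eqI[OF assms])
    fix v assume "v \<in> T" "\<not> starts_dollar v"
    with consistent[OF this] show "\<theta> < bias D \<theta> \<delta> v + \<eta> v \<longleftrightarrow> internal_node T v"
      by (auto simp: decision_set_def split: if_splits)
  qed
  then show "\<eta> \<in> {\<eta> \<in> space (noise lam). privtree_tree D \<theta> \<delta> \<eta> = T}" by simp
qed

lemma finite_tested_nodes: "finite (tested_nodes (T :: 'a::finite node set) k)"
proof (rule finite_subset)
  show "tested_nodes T k \<subseteq> {xs. set xs \<subseteq> UNIV \<and> length xs \<le> k}"
    by (auto simp: tested_nodes_def)
qed (rule finite_lists_length_le, simp)

lemma product_prob_space_laplace: "lam > 0 \<Longrightarrow> product_prob_space (\<lambda>_. laplace lam)"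
  by (simp add: product_prob_space_def product_prob_space_axioms_def product_sigma_finite_def
      prob_space_laplace prob_space_imp_sigma_finite)

lemma consistent_noise_prod_emb:
  "consistent_noise D \<theta> \<delta> T k =
     prod_emb UNIV (\<lambda>_. laplace lam) (tested_nodes T k) (Pi\<^sub>E (tested_nodes T k) (decision_set D \<theta> \<delta> T))"
  by (auto simp: consistent_noise_def prod_emb_def PiE_def Pi_def extensional_def)

lemma decision_set_borel: "decision_set D \<theta> \<delta> T v \<in> sets borel"
  by (simp add: decision_set_def)

lemma
  assumes lam: "lam > 0"
  shows consistent_noise_sets: "consistent_noise D \<theta> \<delta> T k \<in> sets (noise lam)"
    and measure_consistent_noise: "measure (noise lam) (consistent_noise D \<theta> \<delta> T k) =
           (\<Prod>v\<in>tested_nodes T k. measure (laplace lam) (decision_set D \<theta> \<delta> T v))"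
proof -
  interpret product_prob_space "\<lambda>_. laplace lam" UNIV by (rule product_prob_space_laplace[OF lam])
  show "consistent_noise D \<theta> \<delta> T k \<in> sets (noise lam)"
    unfolding consistent_noise_prod_emb[where lam=lam] noise_def
    by (rule sets_PiM_I) (auto simp: finite_tested_nodes decision_set_borel)
  show "measure (noise lam) (consistent_noise D \<theta> \<delta> T k) =
           (\<Prod>v\<in>tested_nodes T k. measure (laplace lam) (decision_set D \<theta> \<delta> T v))"
    unfolding consistent_noise_prod_emb[where lam=lam] noise_def
    by (rule measure_PiM_emb) (auto simp: finite_tested_nodes decision_set_borel)
qed

lemma privtree_prob_le_if_decision_products_le:
  assumes lam: "lam > 0"
    and products_le: "\<And>k. privtree_shape T \<Longrightarrow>
          (\<Prod>v\<in>tested_nodes T k. measure (laplace lam) (decision_set D \<theta> \<delta> T v))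
            \<le> exp c * (\<Prod>v\<in>tested_nodes T k. measure (laplace lam) (decision_set D' \<theta> \<delta> T v))"
  shows "privtree_prob D lam \<theta> \<delta> T \<le> exp c * privtree_prob D' lam \<theta> \<delta> T"
proof (cases "privtree_shape T")
  case False
  then have "{\<eta> \<in> space (noise lam). privtree_tree D \<theta> \<delta> \<eta> = T} = {}"
    using privtree_shape_privtree_tree by auto
  then show ?thesis by (simp add: privtree_prob_def)
next
  case True
  interpret product_prob_space "\<lambda>_. laplace lam" UNIV by (rule product_prob_space_laplace[OF lam])
  interpret N: prob_space "noise lam" unfolding noise_def by (rule P.prob_space_axioms)
  have "decseq (consistent_noise D' \<theta> \<delta> T)"
    unfolding decseq_def consistent_noise_def tested_nodes_def by auto
  then have lim: "(\<lambda>k. measure (noise lam) (consistent_noise D' \<theta> \<delta> T k))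
      \<longlonglongrightarrow> measure (noise lam) (\<Inter>k. consistent_noise D' \<theta> \<delta> T k)"
    by (intro N.finite_Lim_measure_decseq) (auto simp: consistent_noise_sets[OF lam])
  show ?thesis
    unfolding privtree_prob_def privtree_event_eq_Inter[OF True]
  proof (rule LIMSEQ_le_const[OF tendsto_mult_left[OF lim]], intro exI allI impI)
    fix k :: nat
    have "measure (noise lam) (\<Inter>k. consistent_noise D \<theta> \<delta> T k) \<le> measure (noise lam) (consistent_noise D \<theta> \<delta> T k)"
      by (rule N.finite_measure_mono) (auto simp: consistent_noise_sets[OF lam])
    also have "\<dots> \<le> exp c * measure (noise lam) (consistent_noise D' \<theta> \<delta> T k)"
      using products_le[OF True] by (simp add: measure_consistent_noise[OF lam])
    finally show "measure (noise lam) (\<Inter>k. consistent_noise D \<theta> \<delta> T k)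
        \<le> exp c * measure (noise lam) (consistent_noise D' \<theta> \<delta> T k)" .
  qed
qed

lemma measure_decision_set:
  assumes lam: "lam > 0"
  shows "measure (laplace lam) (decision_set D \<theta> \<delta> T v) =
    laplace_cdf (if internal_node T v then (bias D \<theta> \<delta> v - \<theta>) / lam else (\<theta> - bias D \<theta> \<delta> v) / lam)"
  using measure_laplace_greaterThan[OF lam, of "\<theta> - bias D \<theta> \<delta> v"]
    measure_laplace_atMost[OF lam, of "\<theta> - bias D \<theta> \<delta> v"]
    laplace_cdf_uminus[of "(\<theta> - bias D \<theta> \<delta> v) / lam"]
  by (simp add: decision_set_def minus_divide_left)

section \<open>Effect of one more symbol on the scores\<close>

definition occurrences :: "'a sequence \<Rightarrow> 'a node \<Rightarrow> 'a option \<Rightarrow> nat" where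
  "occurrences r w x = card {i. i < length r \<and> r ! i = x \<and> suffix w (None # take i r)}"

lemma hist_add_mset: "hist (add_mset r D) w x = hist D w x + occurrences r w x"
  by (simp add: hist_def occurrences_def)

lemma occurrences_snoc:
  "occurrences (r @ [y]) w x = occurrences r w x + (if x = y \<and> suffix w (None # r) then 1 else 0)"
proof -
  have snoc_positions: "{i. i < length (r @ [y]) \<and> (r @ [y]) ! i = x \<and> suffix w (None # take i (r @ [y]))}
      = {i. i < length r \<and> r ! i = x \<and> suffix w (None # take i r)} \<union>
        (if x = y \<and> suffix w (None # r) then {length r} else {})"
    by (auto simp: nth_append less_Suc_eq)
  have "finite {i. i < length r \<and> r ! i = x \<and> suffix w (None # take i r)}" by simp
  then show ?thesis
    unfolding occurrences_def snoc_positions by (cases "x = y \<and> suffix w (None # r)") simp_all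
qed

lemma hist_extend_prefix:
  assumes "t < length s"
  shows "hist (add_mset (take (Suc t) s) D) w x =
         hist (add_mset (take t s) D) w x + (if x = s ! t \<and> suffix w (None # take t s) then 1 else 0)"
  using assms by (simp add: hist_add_mset take_Suc_conv_app_nth occurrences_snoc)

lemma hist_Cons_le: "hist D (y # w) x \<le> hist D w x"
proof -
  have "card {i. i < length s \<and> s ! i = x \<and> suffix (y # w) (None # take i s)}
     \<le> card {i. i < length s \<and> s ! i = x \<and> suffix w (None # take i s)}" for s :: "'a sequence"
    by (rule card_mono) (auto dest: suffix_ConsD)
  then show ?thesis unfolding hist_def by (intro sum_mset_mono) auto
qed

definition hist_score :: "('b::finite \<Rightarrow> nat) \<Rightarrow> real" where
  "hist_score h = real (\<Sum>x\<in>UNIV. h x) - real (Max (range h))"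

lemma score_eq_hist_score: "score D w = hist_score (hist D w)"
  by (simp add: score_def hist_score_def)

lemma hist_score_mono:
  fixes h h' :: "'b::finite \<Rightarrow> nat"
  assumes le: "\<And>x. h x \<le> h' x"
  shows "hist_score h \<le> hist_score h'"
proof -
  have "Max (range h') \<in> range h'" by (rule Max_in) auto
  then obtain x' where x': "h' x' = Max (range h')" by (metis rangeE)
  have "h x' \<le> Max (range h)" by simp
  moreover have "(\<Sum>x\<in>UNIV - {x'}. h x) \<le> (\<Sum>x\<in>UNIV - {x'}. h' x)"
    by (rule sum_mono) (rule le)
  moreover have "(\<Sum>x\<in>UNIV. f x) = f x' + (\<Sum>x\<in>UNIV - {x'}. f x)" for f :: "'b \<Rightarrow> nat"
    by (subst sum.remove[of UNIV x']) auto
  ultimately show ?thesis unfolding hist_score_def using x' by (smt (verit) of_nat_add of_nat_mono)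
qed

lemma hist_score_add_indicator_le:
  fixes h :: "'b::finite \<Rightarrow> nat"
  shows "hist_score (\<lambda>x. h x + (if x = y then 1 else 0)) \<le> hist_score h + 1"
proof -
  have "(\<Sum>x\<in>UNIV. h x + (if x = y then 1 else 0)) = (\<Sum>x\<in>UNIV. h x) + 1"
    by (simp add: sum.distrib)
  moreover have "Max (range h) \<le> Max (range (\<lambda>x. h x + (if x = y then 1 else 0)))"
  proof -
    have "Max (range h) \<in> range h" by (rule Max_in) auto
    then obtain x' where "h x' = Max (range h)" by (metis rangeE)
    moreover have "h x' + (if x' = y then 1 else 0) \<le> Max (range (\<lambda>x. h x + (if x = y then 1 else 0)))"
      by simp
    ultimately show ?thesis by linarith
  qed
  ultimately show ?thesis unfolding hist_score_def by simp
qed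

lemma score_Cons_le: "score D (y # w) \<le> score D w"
  unfolding score_eq_hist_score by (rule hist_score_mono) (rule hist_Cons_le)

lemma score_add_empty: "score (add_mset [] D) w = score D w"
proof -
  have "hist (add_mset [] D) w = hist D w"
    by (simp add: fun_eq_iff hist_add_mset occurrences_def)
  then show ?thesis by (simp add: score_eq_hist_score)
qed

context
  fixes s :: "'a::finite sequence" and t :: nat
  assumes t: "t < length s"
begin

lemma score_le_score_extend_prefix:
  "score (add_mset (take t s) D) w \<le> score (add_mset (take (Suc t) s) D) w"
  unfolding score_eq_hist_score by (rule hist_score_mono) (simp add: hist_extend_prefix[OF t])

lemma score_extend_prefix_off_chain:
  assumes "\<not> suffix w (None # take t s)"
  shows "score (add_mset (take (Suc t) s) D) w = score (add_mset (take t s) D) w"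
proof -
  have "hist (add_mset (take (Suc t) s) D) w = hist (add_mset (take t s) D) w"
    using assms by (simp add: fun_eq_iff hist_extend_prefix[OF t])
  then show ?thesis by (simp add: score_eq_hist_score)
qed

lemma score_extend_prefix_le:
  "score (add_mset (take (Suc t) s) D) w \<le> score (add_mset (take t s) D) w + 1"
proof (cases "suffix w (None # take t s)")
  case True
  then have "hist (add_mset (take (Suc t) s) D) w =
      (\<lambda>x. hist (add_mset (take t s) D) w x + (if x = s ! t then 1 else 0))"
    by (simp add: hist_extend_prefix[OF t] fun_eq_iff)
  then show ?thesis unfolding score_eq_hist_score by (simp add: hist_score_add_indicator_le)
qed (simp add: score_extend_prefix_off_chain)

end

section \<open>A potential for the log-probabilities along a chain\<close>

text \<open>With \<open>Lb = \<delta> / \<lambda>\<close>, a node whose normalised bias \<open>(b(w) - \<theta>) / \<lambda>\<close> equals \<open>max (-Lb) t\<close> is split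
  with probability \<open>exp (- potential Lb t)\<close>. Lowering \<open>t\<close> by \<open>a\<close> divides this probability by
  \<open>exp (potential Lb (t - a) - potential Lb t)\<close>, which is bounded by integrating \<open>potential_deriv\<close>.\<close>

definition potential :: "real \<Rightarrow> real \<Rightarrow> real" where
  "potential Lb t = - ln (laplace_cdf (max (- Lb) t))"

definition potential_deriv :: "real \<Rightarrow> real \<Rightarrow> real" where
  "potential_deriv Lb t =
     (if t < - Lb then 0 else if t < 0 then -1 else - (exp (- t) / 2) / (1 - exp (- t) / 2))"

lemma exp_neg_potential: "exp (- potential Lb t) = laplace_cdf (max (- Lb) t)"
  by (simp add: potential_def laplace_cdf_pos)

lemma potential_antimono: "a \<ge> 0 \<Longrightarrow> potential Lb u \<le> potential Lb (u - a)"
  unfolding potential_def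
  by (simp add: laplace_cdf_pos laplace_cdf_mono)

lemma continuous_on_potential: "continuous_on A (potential Lb)"
proof -
  have "continuous_on A (\<lambda>t. laplace_cdf (max (- Lb) t))"
    by (rule continuous_on_compose2[OF continuous_on_laplace_cdf[of UNIV]]) (auto intro!: continuous_intros)
  moreover have "\<forall>x\<in>A. laplace_cdf (max (- Lb) x) \<noteq> 0"
    using laplace_cdf_pos by (metis less_irrefl)
  ultimately show ?thesis
    unfolding potential_def[abs_def] by (intro continuous_on_minus continuous_on_ln)
qed

lemma has_real_derivative_potential:
  assumes Lb: "Lb > 0" and t: "t \<noteq> - Lb" "t \<noteq> 0"
  shows "(potential Lb has_real_derivative potential_deriv Lb t) (at t)"
proof -
  consider "t < - Lb" | "- Lb < t" "t < 0" | "0 < t" using t by linarith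
  then show ?thesis
  proof cases
    case 1
    have "((\<lambda>_. - ln (laplace_cdf (- Lb))) has_real_derivative potential_deriv Lb t) (at t)"
      using 1 by (simp add: potential_deriv_def)
    then show ?thesis
      by (rule has_field_derivative_transform_within_open[of _ _ _ "{..< - Lb}"])
        (simp_all add: 1 potential_def max_def)
  next
    case 2
    have d: "((\<lambda>x. ln 2 - x) has_real_derivative potential_deriv Lb t) (at t)"
      using 2 by (auto simp: potential_deriv_def intro!: derivative_eq_intros)
    have e: "ln 2 - x = potential Lb x" if "x \<in> {- Lb<..<0}" for x
      using that by (simp add: potential_def laplace_cdf_def ln_div)
    show ?thesis
      by (rule has_field_derivative_transform_within_open[OF d, of "{- Lb<..<0}"]) (simp_all add: 2 e)
  next
    case 3
    have "exp (- t) < 1" using 3 by simp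
    then have "exp (- t) < 2" by linarith
    then have d: "((\<lambda>x. - ln (1 - exp (- x) / 2)) has_real_derivative potential_deriv Lb t) (at t)"
      using 3 Lb by (auto simp: potential_deriv_def intro!: derivative_eq_intros)
    have e: "- ln (1 - exp (- x) / 2) = potential Lb x" if "x \<in> {0<..}" for x
      using that Lb by (simp add: potential_def laplace_cdf_def)
    show ?thesis
      by (rule has_field_derivative_transform_within_open[OF d, of "{0<..}"]) (simp_all add: 3 e)
  qed
qed

lemma potential_deriv_bounds:
  assumes Lb: "Lb > 0"
  shows "0 \<le> - potential_deriv Lb t" and "- potential_deriv Lb t \<le> 1"
    and "t < - Lb \<Longrightarrow> potential_deriv Lb t = 0"
    and "t \<ge> 0 \<Longrightarrow> - potential_deriv Lb t \<le> exp (- t)"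
proof -
  have nonneg_part: "0 \<le> - potential_deriv Lb t \<and> - potential_deriv Lb t \<le> exp (- t)" if t0: "t \<ge> 0"
  proof -
    define e where "e = exp (- t)"
    have e: "e \<le> 1" "e > 0" using t0 by (auto simp: e_def)
    have eq: "- potential_deriv Lb t = (e / 2) / (1 - e / 2)"
      using t0 Lb by (simp add: potential_deriv_def e_def)
    have "(e / 2) / (1 - e / 2) \<le> (e / 2) / (1/2)"
      by (rule divide_left_mono) (use e in auto)
    moreover have "0 \<le> (e / 2) / (1 - e / 2)" using e by simp
    ultimately show ?thesis unfolding eq e_def[symmetric] by simp
  qed
  show "0 \<le> - potential_deriv Lb t"
    using nonneg_part by (cases "t \<ge> 0") (auto simp: potential_deriv_def)
  show "- potential_deriv Lb t \<le> 1"
  proof (cases "t \<ge> 0")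
    case True
    then have "exp (- t) \<le> 1" by simp
    then show ?thesis using nonneg_part[OF True] by linarith
  qed (auto simp: potential_deriv_def)
  show "t < - Lb \<Longrightarrow> potential_deriv Lb t = 0" by (simp add: potential_deriv_def)
  show "t \<ge> 0 \<Longrightarrow> - potential_deriv Lb t \<le> exp (- t)" using nonneg_part by blast
qed

definition geometric_decay_sum :: "real \<Rightarrow> real" where
  "geometric_decay_sum Lb = 1 / (1 - exp (- Lb))"

lemma geometric_decay_sum_ge_1: "Lb > 0 \<Longrightarrow> geometric_decay_sum Lb \<ge> 1"
  by (simp add: geometric_decay_sum_def)

lemma geometric_decay_sum_unfold:
  "Lb > 0 \<Longrightarrow> geometric_decay_sum Lb = 1 + geometric_decay_sum Lb * exp (- Lb)"
  by (simp add: geometric_decay_sum_def field_simps)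

text \<open>The invariant for summing slopes along a chain spaced by \<open>Lb\<close> and starting at \<open>t\<close>: for
  \<open>t \<ge> 0\<close> the slopes decay geometrically from \<open>exp (-t)\<close>.\<close>

definition chain_slope_bound :: "real \<Rightarrow> real \<Rightarrow> real" where
  "chain_slope_bound Lb t =
     (if t \<ge> 0 then geometric_decay_sum Lb * exp (- t) else 1 + geometric_decay_sum Lb)"

lemma chain_slope_bound_le: "Lb > 0 \<Longrightarrow> chain_slope_bound Lb t \<le> 1 + geometric_decay_sum Lb"
  using geometric_decay_sum_ge_1[of Lb]
  by (auto simp: chain_slope_bound_def intro: order.trans[OF mult_left_le])

lemma neg_potential_deriv_le_chain_slope_bound:
  assumes Lb: "Lb > 0"
  shows "- potential_deriv Lb t \<le> chain_slope_bound Lb t"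
proof (cases "t \<ge> 0")
  case True
  have "exp (- t) \<le> geometric_decay_sum Lb * exp (- t)"
    using geometric_decay_sum_ge_1[OF Lb] by simp
  then have "- potential_deriv Lb t \<le> geometric_decay_sum Lb * exp (- t)"
    using potential_deriv_bounds(4)[OF Lb True] by linarith
  then show ?thesis using True by (simp add: chain_slope_bound_def)
qed (use potential_deriv_bounds(2)[OF Lb, of t] geometric_decay_sum_ge_1[OF Lb] in
      \<open>simp add: chain_slope_bound_def\<close>)

lemma chain_slope_bound_step:
  assumes Lb: "Lb > 0" and spaced: "t' \<ge> t + Lb"
  shows "- potential_deriv Lb t + chain_slope_bound Lb t' \<le> chain_slope_bound Lb t"
proof -
  let ?K = "geometric_decay_sum Lb"
  note bounds = potential_deriv_bounds[OF Lb, of t]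
  consider "t \<ge> 0" | "t < - Lb" | "- Lb \<le> t" "t < 0" by linarith
  then show ?thesis
  proof cases
    case 1
    have "exp (- t') \<le> exp (- t) * exp (- Lb)" using spaced by (simp flip: exp_add)
    then have "chain_slope_bound Lb t' \<le> exp (- t) * (?K * exp (- Lb))"
      using spaced 1 Lb geometric_decay_sum_ge_1[OF Lb]
      by (simp add: chain_slope_bound_def mult.left_commute)
    then have "- potential_deriv Lb t + chain_slope_bound Lb t' \<le> exp (- t) * (1 + ?K * exp (- Lb))"
      using bounds(4)[OF 1] by (simp add: algebra_simps)
    then show ?thesis
      using 1 geometric_decay_sum_unfold[OF Lb] by (simp add: chain_slope_bound_def mult.commute)
  next
    case 2
    then show ?thesis
      using bounds(3)[OF 2] chain_slope_bound_le[OF Lb, of t'] Lb by (simp add: chain_slope_bound_def)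
  next
    case 3
    have "?K * exp (- t') \<le> ?K"
      using spaced 3 geometric_decay_sum_ge_1[OF Lb] by (intro mult_left_le) auto
    then show ?thesis using bounds(2) spaced 3 by (simp add: chain_slope_bound_def)
  qed
qed

lemma sum_potential_deriv_spaced_ge:
  assumes Lb: "Lb > 0" and spaced: "\<And>j. t (Suc j) \<ge> t j + Lb"
  shows "(\<Sum>j\<le>n. potential_deriv Lb (t j)) \<ge> - (1 + geometric_decay_sum Lb)"
proof -
  have "(\<Sum>j\<le>n. - potential_deriv Lb (t j)) \<le> chain_slope_bound Lb (t 0)"
    using spaced
  proof (induction n arbitrary: t)
    case (Suc n)
    have "(\<Sum>j\<le>n. - potential_deriv Lb (t (Suc j))) \<le> chain_slope_bound Lb (t 1)"
      using Suc.IH[of "\<lambda>j. t (Suc j)"] Suc.prems by simp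
    then show ?case
      using chain_slope_bound_step[OF Lb Suc.prems[of 0]]
      by (simp add: sum.atMost_Suc_shift del: sum.atMost_Suc)
  qed (simp add: neg_potential_deriv_le_chain_slope_bound[OF Lb])
  then show ?thesis
    using chain_slope_bound_le[OF Lb, of "t 0"] by (simp add: sum_negf)
qed

lemma has_integral_sum_potential_deriv:
  fixes d :: "nat \<Rightarrow> real"
  assumes Lb: "Lb > 0" and "a \<le> b"
  shows "((\<lambda>s. \<Sum>j\<le>n. potential_deriv Lb (s + d j)) has_integral
           (\<Sum>j\<le>n. potential Lb (b + d j)) - (\<Sum>j\<le>n. potential Lb (a + d j))) {a..b}"
proof (rule fundamental_theorem_of_calculus_strong[of "(\<lambda>j. - Lb - d j) ` {..n} \<union> (\<lambda>j. - d j) ` {..n}"])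
  show "continuous_on {a..b} (\<lambda>s. \<Sum>j\<le>n. potential Lb (s + d j))"
    by (intro continuous_on_sum continuous_on_compose2[OF continuous_on_potential[of UNIV]])
      (auto intro!: continuous_intros)
  fix x assume x: "x \<in> {a..b} - ((\<lambda>j. - Lb - d j) ` {..n} \<union> (\<lambda>j. - d j) ` {..n})"
  have "((\<lambda>s. potential Lb (s + d j)) has_real_derivative potential_deriv Lb (x + d j)) (at x)"
    if "j \<in> {..n}" for j
  proof -
    have "x \<noteq> - Lb - d j" "x \<noteq> - d j" using x that by auto
    then have "x + d j \<noteq> - Lb" "x + d j \<noteq> 0" by linarith+
    moreover have "((\<lambda>s. s + d j) has_real_derivative 1) (at x)"
      by (auto intro!: derivative_eq_intros)
    ultimately show ?thesis
      using DERIV_chain2[OF has_real_derivative_potential[OF Lb]] by fastforce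
  qed
  then have "((\<lambda>s. \<Sum>j\<le>n. potential Lb (s + d j)) has_real_derivative
      (\<Sum>j\<le>n. potential_deriv Lb (x + d j))) (at x)"
    by (rule DERIV_sum)
  then show "((\<lambda>s. \<Sum>j\<le>n. potential Lb (s + d j)) has_vector_derivative
      (\<Sum>j\<le>n. potential_deriv Lb (x + d j))) (at x)"
    by (simp add: has_real_derivative_iff_has_vector_derivative)
qed (use assms in auto)

lemma potential_shift_sum_le:
  assumes Lb: "Lb > 0" and a: "a \<ge> 0" and spaced: "\<And>j. d (Suc j) \<ge> d j + Lb"
  shows "(\<Sum>j\<le>n. potential Lb (d j - a) - potential Lb (d j)) \<le> a * (1 + geometric_decay_sum Lb)"
proof -
  let ?K = "1 + geometric_decay_sum Lb"
  have "((\<lambda>_. - ?K) has_integral - ?K * a) {- a..0}"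
    using has_integral_const_real[of "- ?K" "- a" 0] a by (simp add: mult.commute)
  then have "- ?K * a \<le> (\<Sum>j\<le>n. potential Lb (0 + d j)) - (\<Sum>j\<le>n. potential Lb (- a + d j))"
    by (rule has_integral_le[OF _ has_integral_sum_potential_deriv[OF Lb]])
      (use a sum_potential_deriv_spaced_ge[OF Lb, of "\<lambda>j. _ + d j"] spaced in auto)
  then show ?thesis by (simp add: sum_subtractf algebra_simps)
qed

section \<open>Decision nodes on the path of the new symbol\<close>

lemma privtree_shape_suffix_closed:
  assumes shape: "privtree_shape T" and "zs @ w \<in> T"
  shows "w \<in> T"
  using assms(2)
proof (induction zs)
  case (Cons z zs)
  have "\<forall>y v. y # v \<in> T \<longrightarrow> v \<in> T"
    using shape unfolding privtree_shape_def by blast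
  then have "zs @ w \<in> T" using Cons.prems by simp
  then show ?case by (rule Cons.IH)
qed simp

lemma internal_node_if_strict_suffix:
  assumes shape: "privtree_shape T" and "b \<in> T" and "strict_suffix a b"
  shows "internal_node T a"
proof -
  obtain xs where "b = xs @ a" "xs \<noteq> []"
    using \<open>strict_suffix a b\<close> by (auto simp: strict_suffix_def suffix_def)
  moreover obtain zs y where "xs = zs @ [y]"
    using \<open>xs \<noteq> []\<close> by (metis rev_exhaust)
  ultimately have "zs @ y # a \<in> T" using \<open>b \<in> T\<close> by simp
  then have "y # a \<in> T" by (rule privtree_shape_suffix_closed[OF shape])
  then show ?thesis using shape unfolding privtree_shape_def internal_node_def by blast
qed

lemma card_leaves_on_suffix_chain_le_1:
  assumes shape: "privtree_shape T"
  shows "card {v \<in> G. v \<in> T \<and> suffix v p \<and> \<not> internal_node T v} \<le> 1"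
proof -
  have "v = w" if "v \<in> T" "w \<in> T" "suffix v p" "suffix w p"
    "\<not> internal_node T v" "\<not> internal_node T w" for v w
    using suffix_same_cases[OF that(3,4)] internal_node_if_strict_suffix[OF shape] that
    by (metis strict_suffix_def)
  then have "\<forall>v\<in>{v \<in> G. v \<in> T \<and> suffix v p \<and> \<not> internal_node T v}.
      \<forall>w\<in>{v \<in> G. v \<in> T \<and> suffix v p \<and> \<not> internal_node T v}. v = w"
    by blast
  then show ?thesis
    by (cases "finite {v \<in> G. v \<in> T \<and> suffix v p \<and> \<not> internal_node T v}")
      (auto simp: card_le_Suc0_iff_eq)
qed

lemma suffix_Cons_None_in_drops:
  assumes "suffix v (None # r)" "\<not> starts_dollar v"
  shows "v \<in> (\<lambda>j. drop j r) ` {..length r}"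
proof -
  have "suffix v r" using assms by (auto simp: suffix_Cons starts_dollar_def)
  then obtain zs where "r = zs @ v" by (auto simp: suffix_def)
  then show ?thesis by (intro image_eqI[of _ _ "length zs"]) auto
qed

lemma prod_le_exp_mult_prod:
  fixes m m' h :: "'b \<Rightarrow> real"
  assumes "finite G" and le: "\<And>v. v \<in> G \<Longrightarrow> m v \<le> exp (h v) * m' v"
    and "\<And>v. v \<in> G \<Longrightarrow> 0 \<le> m v" and "\<And>v. v \<in> G \<Longrightarrow> 0 \<le> m' v"
    and "(\<Sum>v\<in>G. h v) \<le> c"
  shows "(\<Prod>v\<in>G. m v) \<le> exp c * (\<Prod>v\<in>G. m' v)"
proof -
  have "(\<Prod>v\<in>G. m v) \<le> (\<Prod>v\<in>G. exp (h v) * m' v)"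
    by (rule prod_mono) (use assms in auto)
  also have "\<dots> = exp (\<Sum>v\<in>G. h v) * (\<Prod>v\<in>G. m' v)"
    using \<open>finite G\<close> by (simp add: prod.distrib exp_sum)
  also have "\<dots> \<le> exp c * (\<Prod>v\<in>G. m' v)"
    by (rule mult_right_mono) (use assms in \<open>auto intro: prod_nonneg\<close>)
  finally show ?thesis .
qed

section \<open>Appending one symbol to a sequence of the dataset\<close>

text \<open>Appending \<open>s ! t\<close> to \<open>r\<close> changes the histograms only at the suffixes of \<open>$ r\<close>, a single
  root-to-leaf path.\<close>

locale symbol_extension =
  fixes D :: "'a::finite dataset" and s :: "'a sequence" and t :: nat and lam \<theta> \<delta> Lb :: real
  assumes t: "t < length s" and lam: "lam > 0" and Lb: "Lb > 0" and delta: "\<delta> = lam * Lb"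
begin

abbreviation "r \<equiv> take t s"
abbreviation "D0 \<equiv> add_mset r D"
abbreviation "D1 \<equiv> add_mset (take (Suc t) s) D"

definition level :: "'a node \<Rightarrow> real" where
  "level v = (score D1 v - real (depth v) * \<delta> - \<theta>) / lam"

lemma divide_lam_mono: "a \<le> b \<Longrightarrow> a / lam \<le> b / lam"
  using lam by (simp add: divide_right_mono)

lemma bias_D0_le_D1: "bias D0 \<theta> \<delta> v \<le> bias D1 \<theta> \<delta> v"
  using score_le_score_extend_prefix[OF t, of D v] by (simp add: bias_def)

lemma bias_D1_le_D0: "bias D1 \<theta> \<delta> v \<le> bias D0 \<theta> \<delta> v + 1"
  using score_extend_prefix_le[OF t, of D v] unfolding bias_def by (auto simp: max_def)

lemma bias_off_chain: "\<not> suffix v (None # r) \<Longrightarrow> bias D1 \<theta> \<delta> v = bias D0 \<theta> \<delta> v"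
  using score_extend_prefix_off_chain[OF t, of v D] by (simp add: bias_def)

lemma normalised_bias_eq:
  "(bias D' \<theta> \<delta> v - \<theta>) / lam = max (- Lb) ((score D' v - real (depth v) * \<delta> - \<theta>) / lam)"
  using lam unfolding bias_def max_diff_distrib_left max_divide_distrib_right by (simp add: delta)

lemma decision_prob_D0_le:
  "measure (laplace lam) (decision_set D0 \<theta> \<delta> T v) \<le>
     exp (if suffix v (None # r) \<and> \<not> internal_node T v then 1 / lam else 0) *
       measure (laplace lam) (decision_set D1 \<theta> \<delta> T v)"
proof (cases "internal_node T v")
  case True
  have "laplace_cdf ((bias D0 \<theta> \<delta> v - \<theta>) / lam) \<le> laplace_cdf ((bias D1 \<theta> \<delta> v - \<theta>) / lam)"
    using bias_D0_le_D1[of v] by (intro laplace_cdf_mono divide_lam_mono) simp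
  then show ?thesis using True by (simp add: measure_decision_set[OF lam])
next
  case leaf: False
  show ?thesis
  proof (cases "suffix v (None # r)")
    case True
    have "laplace_cdf ((\<theta> - bias D0 \<theta> \<delta> v) / lam)
        \<le> exp (1 / lam) * laplace_cdf ((\<theta> - bias D0 \<theta> \<delta> v) / lam - 1 / lam)"
      using lam by (intro laplace_cdf_le_exp_mult_shift) simp
    also have "\<dots> \<le> exp (1 / lam) * laplace_cdf ((\<theta> - bias D1 \<theta> \<delta> v) / lam)"
      unfolding diff_divide_distrib[symmetric]
      using bias_D1_le_D0[of v] by (intro mult_left_mono laplace_cdf_mono divide_lam_mono) auto
    finally show ?thesis using True leaf by (simp add: measure_decision_set[OF lam])
  qed (use leaf bias_off_chain in \<open>simp add: measure_decision_set[OF lam]\<close>)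
qed

lemma decision_prob_D1_le:
  "measure (laplace lam) (decision_set D1 \<theta> \<delta> T v) \<le>
     exp (if suffix v (None # r) \<and> internal_node T v
          then potential Lb (level v - 1 / lam) - potential Lb (level v) else 0)
       * measure (laplace lam) (decision_set D0 \<theta> \<delta> T v)"
proof (cases "internal_node T v")
  case False
  have "laplace_cdf ((\<theta> - bias D1 \<theta> \<delta> v) / lam) \<le> laplace_cdf ((\<theta> - bias D0 \<theta> \<delta> v) / lam)"
    using bias_D0_le_D1[of v] by (intro laplace_cdf_mono divide_lam_mono) simp
  then show ?thesis using False by (simp add: measure_decision_set[OF lam])
next
  case internal: True
  show ?thesis
  proof (cases "suffix v (None # r)")
    case True
    let ?c = "potential Lb (level v - 1 / lam) - potential Lb (level v)"
    have "level v - 1 / lam \<le> (score D0 v - real (depth v) * \<delta> - \<theta>) / lam"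
      unfolding level_def diff_divide_distrib[symmetric]
      using score_extend_prefix_le[OF t, of D v] by (intro divide_lam_mono) simp
    then have lower: "max (- Lb) (level v - 1 / lam) \<le> (bias D0 \<theta> \<delta> v - \<theta>) / lam"
      unfolding normalised_bias_eq[of D0] by simp
    have "laplace_cdf ((bias D1 \<theta> \<delta> v - \<theta>) / lam) = exp (- potential Lb (level v))"
      by (simp add: normalised_bias_eq exp_neg_potential level_def)
    also have "\<dots> = exp ?c * laplace_cdf (max (- Lb) (level v - 1 / lam))"
      by (simp add: exp_neg_potential[symmetric] flip: exp_add)
    also have "\<dots> \<le> exp ?c * laplace_cdf ((bias D0 \<theta> \<delta> v - \<theta>) / lam)"
      using lower by (intro mult_left_mono laplace_cdf_mono) simp_all
    finally show ?thesis using True internal by (simp add: measure_decision_set[OF lam])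
  qed (use internal bias_off_chain in \<open>simp add: measure_decision_set[OF lam]\<close>)
qed

lemma leaf_cost_sum_le:
  assumes shape: "privtree_shape T"
  shows "(\<Sum>v\<in>tested_nodes T k. if suffix v (None # r) \<and> \<not> internal_node T v then 1 / lam else 0) \<le> 1 / lam"
proof -
  let ?leaves = "{v \<in> tested_nodes T k. suffix v (None # r) \<and> \<not> internal_node T v}"
  have "card ?leaves \<le> 1"
    using card_leaves_on_suffix_chain_le_1[OF shape, of "tested_nodes T k" "None # r"]
    by (simp add: tested_nodes_def conj_ac)
  then have "real (card ?leaves) * (1 / lam) \<le> 1 * (1 / lam)"
    using lam by (intro mult_right_mono) simp_all
  then show ?thesis
    by (simp add: sum.inter_filter[OF finite_tested_nodes, symmetric])
qed

text \<open>Along the path the levels drop by at least \<open>Lb\<close> per step: scores do not increase towards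
  the leaves while the depth penalty grows by \<open>\<delta> = lam * Lb\<close>. Beyond the end of the path the
  levels are continued artificially.\<close>

definition path_level :: "nat \<Rightarrow> real" where
  "path_level j = (if j \<le> length r then level (drop j r) else level [] + real (j - length r) * Lb)"

lemma level_Cons_le: "level (x # w) + Lb \<le> level w"
proof -
  have "(score D1 (x # w) - real (depth (x # w)) * \<delta> - \<theta>) + \<delta> \<le> score D1 w - real (depth w) * \<delta> - \<theta>"
    using score_Cons_le[of D1 x w] by (simp add: depth_def algebra_simps)
  then have "((score D1 (x # w) - real (depth (x # w)) * \<delta> - \<theta>) + \<delta>) / lam \<le> level w"
    unfolding level_def by (rule divide_lam_mono)
  moreover have "\<delta> / lam = Lb" using lam by (simp add: delta)
  ultimately show ?thesis by (simp add: level_def add_divide_distrib)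
qed

lemma path_level_spaced: "path_level (Suc j) \<ge> path_level j + Lb"
proof -
  consider "j < length r" | "j = length r" | "length r < j" by linarith
  then show ?thesis
  proof cases
    case 1
    then have "drop j r = r ! j # drop (Suc j) r" by (rule Cons_nth_drop_Suc[symmetric])
    then show ?thesis using 1 level_Cons_le[of "r ! j" "drop (Suc j) r"] by (simp add: path_level_def)
  next
    case 2
    then show ?thesis by (auto simp: path_level_def min_def)
  next
    case 3
    then have "real (Suc j - length r) = real (j - length r) + 1" by simp
    then show ?thesis using 3 by (simp add: path_level_def algebra_simps del: length_take)
  qed
qed

lemma internal_cost_sum_le:
  "(\<Sum>v\<in>tested_nodes T k. if suffix v (None # r) \<and> internal_node T v
        then potential Lb (level v - 1 / lam) - potential Lb (level v) else 0)
    \<le> 1 / lam * (1 + geometric_decay_sum Lb)"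
proof -
  define cost where "cost v = potential Lb (level v - 1 / lam) - potential Lb (level v)" for v
  define path where "path = (\<lambda>j. drop j r) ` {..length r}"
  have cost_nonneg: "0 \<le> cost v" for v
    unfolding cost_def using potential_antimono[of "1 / lam" Lb "level v"] lam by simp
  have "(\<Sum>v\<in>tested_nodes T k. if suffix v (None # r) \<and> internal_node T v then cost v else 0)
      \<le> (\<Sum>v\<in>tested_nodes T k. if v \<in> path then cost v else 0)"
  proof (rule sum_mono)
    fix v assume "v \<in> tested_nodes T k"
    then have "suffix v (None # r) \<Longrightarrow> v \<in> path"
      unfolding path_def tested_nodes_def using suffix_Cons_None_in_drops by blast
    then show "(if suffix v (None # r) \<and> internal_node T v then cost v else 0)
        \<le> (if v \<in> path then cost v else 0)"
      using cost_nonneg by auto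
  qed
  also have "\<dots> \<le> (\<Sum>v\<in>path. cost v)"
    by (simp add: sum.inter_filter[OF finite_tested_nodes, symmetric])
      (rule sum_mono2, auto simp: path_def cost_nonneg)
  also have "\<dots> = (\<Sum>j\<le>length r. cost (drop j r))"
    unfolding path_def by (rule sum.reindex_cong[OF inj_onI]) (auto dest: arg_cong[of _ _ length])
  also have "\<dots> = (\<Sum>j\<le>length r. potential Lb (path_level j - 1 / lam) - potential Lb (path_level j))"
    by (rule sum.cong) (auto simp: path_level_def cost_def)
  also have "\<dots> \<le> 1 / lam * (1 + geometric_decay_sum Lb)"
    using lam by (intro potential_shift_sum_le[where d=path_level, OF Lb _ path_level_spaced]) simp
  finally show ?thesis unfolding cost_def .
qed

lemma privtree_prob_D0_le:
  "privtree_prob D0 lam \<theta> \<delta> T \<le> exp (1 / lam) * privtree_prob D1 lam \<theta> \<delta> T"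
  by (rule privtree_prob_le_if_decision_products_le[OF lam],
      rule prod_le_exp_mult_prod[OF finite_tested_nodes decision_prob_D0_le _ _ leaf_cost_sum_le]) auto

lemma privtree_prob_D1_le:
  "privtree_prob D1 lam \<theta> \<delta> T \<le> exp (1 / lam * (1 + geometric_decay_sum Lb)) * privtree_prob D0 lam \<theta> \<delta> T"
  by (rule privtree_prob_le_if_decision_products_le[OF lam],
      rule prod_le_exp_mult_prod[OF finite_tested_nodes decision_prob_D1_le _ _ internal_cost_sum_le]) auto

end

section \<open>Privacy of PrivTree\<close>

lemma privtree_tree_cong_bias:
  assumes "\<And>v. bias D \<theta> \<delta> v = bias D' \<theta> \<delta> v"
  shows "privtree_tree D \<theta> \<delta> \<eta> = privtree_tree D' \<theta> \<delta> \<eta>"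
  using assms privtree_tree_internal_iff[of _ D' \<theta> \<delta> \<eta>]
  by (intro privtree_tree_eqI[OF privtree_shape_privtree_tree]) simp

lemma privtree_prob_add_empty: "privtree_prob (add_mset [] D) lam \<theta> \<delta> T = privtree_prob D lam \<theta> \<delta> T"
  unfolding privtree_prob_def
  by (subst privtree_tree_cong_bias[of "add_mset [] D" \<theta> \<delta> D]) (simp_all add: bias_def score_add_empty)

context
  fixes lam \<delta> Lb :: real
  assumes lam: "lam > 0" and Lb: "Lb > 0" and delta: "\<delta> = lam * Lb"
begin

lemma privtree_prob_le_add_mset:
  "privtree_prob D lam \<theta> \<delta> T \<le> exp (real (length s) / lam) * privtree_prob (add_mset s D) lam \<theta> \<delta> T"
proof -
  have "privtree_prob (add_mset (take 0 s) D) lam \<theta> \<delta> T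
      \<le> exp (real t / lam) * privtree_prob (add_mset (take t s) D) lam \<theta> \<delta> T" if "t \<le> length s" for t
    using that
  proof (induction t)
    case (Suc t)
    interpret symbol_extension D s t lam \<theta> \<delta> Lb
      using Suc.prems lam Lb delta by unfold_locales auto
    have "privtree_prob (add_mset (take 0 s) D) lam \<theta> \<delta> T \<le> exp (real t / lam) * privtree_prob D0 lam \<theta> \<delta> T"
      using Suc by simp
    also have "\<dots> \<le> exp (real t / lam) * (exp (1 / lam) * privtree_prob D1 lam \<theta> \<delta> T)"
      by (intro mult_left_mono privtree_prob_D0_le) simp
    finally show ?case by (simp add: add_divide_distrib exp_add mult.left_commute)
  qed simp
  from this[of "length s"] show ?thesis by (simp add: privtree_prob_add_empty)
qed

lemma privtree_prob_add_mset_le: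
  "privtree_prob (add_mset s D) lam \<theta> \<delta> T
     \<le> exp (real (length s) * (1 + geometric_decay_sum Lb) / lam) * privtree_prob D lam \<theta> \<delta> T"
proof -
  let ?c = "1 / lam * (1 + geometric_decay_sum Lb)"
  have "privtree_prob (add_mset (take t s) D) lam \<theta> \<delta> T
      \<le> exp (real t * ?c) * privtree_prob (add_mset (take 0 s) D) lam \<theta> \<delta> T" if "t \<le> length s" for t
    using that
  proof (induction t)
    case (Suc t)
    interpret symbol_extension D s t lam \<theta> \<delta> Lb
      using Suc.prems lam Lb delta by unfold_locales auto
    have "privtree_prob D1 lam \<theta> \<delta> T \<le> exp ?c * privtree_prob D0 lam \<theta> \<delta> T"
      by (rule privtree_prob_D1_le)
    also have "\<dots> \<le> exp ?c * (exp (real t * ?c) * privtree_prob (add_mset (take 0 s) D) lam \<theta> \<delta> T)"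
      using Suc by (intro mult_left_mono) simp_all
    also have "\<dots> = exp (real (Suc t) * ?c) * privtree_prob (add_mset (take 0 s) D) lam \<theta> \<delta> T"
      by (simp only: of_nat_Suc distrib_right mult_1 exp_add mult.assoc)
    finally show ?case .
  qed simp
  from this[of "length s"] show ?thesis by (simp add: privtree_prob_add_empty)
qed

lemma insertion_cost_le_budget:
  assumes budget: "(1 + geometric_decay_sum Lb) * real L / lam \<le> \<epsilon>" and "n \<le> L"
  shows "real n * (1 + geometric_decay_sum Lb) / lam \<le> \<epsilon>" and "real n / lam \<le> \<epsilon>"
proof -
  let ?K = "1 + geometric_decay_sum Lb"
  have K: "1 \<le> ?K" using geometric_decay_sum_ge_1[OF Lb] by simp
  have "real n * ?K \<le> real L * ?K"
    using \<open>n \<le> L\<close> K by (intro mult_right_mono) simp_all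
  then have "real n * ?K / lam \<le> real L * ?K / lam"
    using lam by (intro divide_right_mono) simp_all
  also have "\<dots> \<le> \<epsilon>" using budget by (simp add: mult.commute)
  finally show "real n * ?K / lam \<le> \<epsilon>" .
  moreover have "real n / lam \<le> real n * ?K / lam"
    using K lam by (intro divide_right_mono) (simp_all add: mult_le_cancel_left1)
  ultimately show "real n / lam \<le> \<epsilon>" by linarith
qed

lemma privtree_differentially_private:
  assumes budget: "(1 + geometric_decay_sum Lb) * real L / lam \<le> \<epsilon>"
  shows "differentially_private L \<epsilon> (\<lambda>(D :: 'a::finite dataset) Out. privtree_prob D lam \<theta> \<delta> Out)"
  unfolding differentially_private_def
proof (intro allI impI)
  fix D D' :: "'a dataset" and Out
  assume "neighboring L D D'"
  then obtain s where len: "length s \<le> L" and "D' = add_mset s D \<or> D = add_mset s D'"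
    by (auto simp: neighboring_def seq_len_def)
  note bounds = insertion_cost_le_budget[OF budget len, THEN exp_mono]
  have prob_nonneg: "0 \<le> privtree_prob D'' lam \<theta> \<delta> Out" for D'' :: "'a dataset"
    by (simp add: privtree_prob_def)
  from \<open>D' = add_mset s D \<or> D = add_mset s D'\<close>
  show "privtree_prob D lam \<theta> \<delta> Out \<le> exp \<epsilon> * privtree_prob D' lam \<theta> \<delta> Out"
  proof
    assume D': "D' = add_mset s D"
    have "privtree_prob D lam \<theta> \<delta> Out \<le> exp (real (length s) / lam) * privtree_prob D' lam \<theta> \<delta> Out"
      unfolding D' by (rule privtree_prob_le_add_mset)
    also have "\<dots> \<le> exp \<epsilon> * privtree_prob D' lam \<theta> \<delta> Out"
      using bounds(2) prob_nonneg by (rule mult_right_mono)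
    finally show ?thesis .
  next
    assume D: "D = add_mset s D'"
    have "privtree_prob D lam \<theta> \<delta> Out
        \<le> exp (real (length s) * (1 + geometric_decay_sum Lb) / lam) * privtree_prob D' lam \<theta> \<delta> Out"
      unfolding D by (rule privtree_prob_add_mset_le)
    also have "\<dots> \<le> exp \<epsilon> * privtree_prob D' lam \<theta> \<delta> Out"
      using bounds(1) prob_nonneg by (rule mult_right_mono)
    finally show ?thesis .
  qed
qed

end

theorem theorem2:
  fixes L :: nat and \<epsilon> \<theta> lam \<delta> :: real
  assumes "L \<ge> 1" and "\<epsilon> > 0"
    and "lam \<ge> (2 * real (CARD('a::finite) + 1) - 1) / (real (CARD('a) + 1) - 1) * real L / \<epsilon>"
    and "\<delta> = lam * ln (real (CARD('a) + 1))"
  shows "differentially_private L \<epsilon>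
           (\<lambda>(D :: 'a dataset) Out. privtree_prob D lam \<theta> \<delta> Out)"
proof -
  define \<beta> where "\<beta> = real (CARD('a) + 1)"
  have \<beta>: "\<beta> \<ge> 2" unfolding \<beta>_def using card_ge_0_finite[of "UNIV :: 'a set"] by simp
  have Lb: "ln \<beta> > 0" using \<beta> by simp
  have "exp (- ln \<beta>) = 1 / \<beta>" using \<beta> by (simp add: exp_minus inverse_eq_divide)
  then have K: "1 + geometric_decay_sum (ln \<beta>) = (2 * \<beta> - 1) / (\<beta> - 1)"
    using \<beta> by (simp add: geometric_decay_sum_def field_simps)
  have lam_ge: "(2 * \<beta> - 1) / (\<beta> - 1) * real L / \<epsilon> \<le> lam"
    using assms(3) by (simp add: \<beta>_def)
  moreover have "0 < (2 * \<beta> - 1) / (\<beta> - 1) * real L / \<epsilon>"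
    using \<beta> assms(1,2) by simp
  ultimately have lam: "lam > 0" by linarith
  have "(2 * \<beta> - 1) / (\<beta> - 1) * real L \<le> lam * \<epsilon>"
    using lam_ge pos_divide_le_eq[OF assms(2)] by blast
  then have "(1 + geometric_decay_sum (ln \<beta>)) * real L \<le> \<epsilon> * lam"
    by (simp add: K mult.commute)
  then have "(1 + geometric_decay_sum (ln \<beta>)) * real L / lam \<le> \<epsilon>"
    using lam by (simp add: pos_divide_le_eq)
  then show ?thesis
    using privtree_differentially_private[OF lam Lb] assms(4) by (simp add: \<beta>_def)
qed

end
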